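(* Fix $M>0$. If $c\in\ell_{\infty,M}(X^\ast,\mathbb{K}^\ell)$ and $d\in\ell_{\infty,M}(X^\ast,\mathbb{K}^m)$, then $c\circ d\in\ell_{\infty,M_\epsilon}(X^\ast,\mathbb{K}^\ell)$ for any $M_\epsilon=M(1+\epsilon)$ with $\epsilon>\phi(m\|d\|_{\ell_\infty,M})$, where $\phi(x)=x/2+\sqrt{x^2/4+x}$, and $$\|c\circ d\|_{\ell_\infty,M_\epsilon}\leq \|c\|_{\ell_\infty,M}\,(K_\epsilon\circ\phi)(m\|d\|_{\ell_\infty,M}),$$ where $K_\epsilon(a)=\sup_{\eta\in X^\ast}(|\eta|+1)(1+a)^{|\eta|}/(1+\epsilon)^{|\eta|}$.
   Context: $\mathbb{K}\in\{\mathbb{R},\mathbb{C}\}$. $X=\{x_0,x_1,\ldots,x_m\}$ is a finite alphabet, $X^\ast$ its set of words (including the empty word $\emptyset$), $|\eta|$ the length. $\mathbb{K}^\ell\langle\langle X\rangle\rangle$ is the set of maps $X^\ast\to\mathbb{K}^\ell$, written $c=\sum_\eta (c,\eta)\eta$. For $M>0$, $\|c\|_{\ell_\infty,M}=\sup_\eta|(c,\eta)|/(M^{|\eta|}|\eta|!)$ with $|z|=\max_i|z_i|$, and $\ell_{\infty,M}(X^\ast,\mathbb{K}^\ell)$ is the Banach space of series with finite norm. The shuffle product $\sqcup\!\sqcup$ is the bilinear product determined on words by $(x_i\eta)\sqcup\!\sqcup(x_j\xi)=x_i(\eta\sqcup\!\sqcup(x_j\xi))+x_j((x_i\eta)\sqcup\!\sqcup\xi)$,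 $\eta\sqcup\!\sqcup\emptyset=\emptyset\sqcup\!\sqcup\eta=\eta$. Composition product: for $c\in\mathbb{K}^\ell\langle\langle X\rangle\rangle$, $d\in\mathbb{K}^m\langle\langle X\rangle\rangle$ with components $d[1],\ldots,d[m]$ and $d[0]:=\mathbf{1}=1\cdot\emptyset$, let $\psi_d$ be the algebra homomorphism from words to linear endomorphisms of $\mathbb{K}\langle\langle X\rangle\rangle$ given by $\psi_d(\emptyset)=\mathrm{id}$, $\psi_d(x_i\eta)=\psi_d(x_i)\circ\psi_d(\eta)$, $\psi_d(x_i)(e)=x_0(d[i]\sqcup\!\sqcup e)$, $i=0,\ldots,m$; then $c\circ d=\sum_{\eta\in X^\ast}(c,\eta)\,\psi_d(\eta)(\mathbf{1})$. *)

theory Defs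
  imports Complex_Main
begin

text \<open>Words over the alphabet X = {x_0,...,x_m} are lists of naturals with letters in {0..m}
  (letter i stands for x_i). Series are functions on words; a K^n-valued series is a function
  nat list => nat => 'k whose components are indexed by 0..<n.\<close>

definition words :: "nat \<Rightarrow> nat list set" where
  "words m = {\<eta>. set \<eta> \<subseteq> {0..m}}"

fun shw :: "'a list \<Rightarrow> 'a list \<Rightarrow> 'a list list" where
  "shw [] v = [v]"
| "shw u [] = [u]"
| "shw (a # u) (b # v) = map ((#) a) (shw u (b # v)) @ map ((#) b) (shw (a # u) v)"

text \<open>Bilinear extension to series: the coefficient of w collects all pairs (u,v) of words
  whose shuffle contains w (such u, v are necessarily subsequences of w).\<close>
definition shuffle :: "(nat list \<Rightarrow> 'k::comm_ring_1) \<Rightarrow> (nat list \<Rightarrow> 'k) \<Rightarrow> nat list \<Rightarrow> 'k" where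
  "shuffle c d w = (\<Sum>u\<in>set (subseqs w). \<Sum>v\<in>set (subseqs w).
      c u * d v * of_nat (count_list (shw u v) w))"

definition one_s :: "nat list \<Rightarrow> 'k::zero_neq_one" where
  "one_s w = (if w = [] then 1 else 0)"

definition pre0 :: "(nat list \<Rightarrow> 'k::zero) \<Rightarrow> nat list \<Rightarrow> 'k" where
  "pre0 s w = (case w of [] \<Rightarrow> 0 | a # w' \<Rightarrow> (if a = 0 then s w' else 0))"

text \<open>d[0] = 1 and d[i] = i-th component (stored at index i-1) for i = 1..m.\<close>
definition dcomp :: "(nat list \<Rightarrow> nat \<Rightarrow> 'k::zero_neq_one) \<Rightarrow> nat \<Rightarrow> nat list \<Rightarrow> 'k" where
  "dcomp d i = (if i = 0 then one_s else (\<lambda>w. d w (i - 1)))"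

fun psi_one :: "(nat list \<Rightarrow> nat \<Rightarrow> 'k::comm_ring_1) \<Rightarrow> nat list \<Rightarrow> nat list \<Rightarrow> 'k" where
  "psi_one d [] = one_s"
| "psi_one d (i # \<eta>) = pre0 (shuffle (dcomp d i) (psi_one d \<eta>))"

text \<open>Composition product. psi_d(eta)(1) is supported on words of length at least |eta|,
  so the coefficient of w only receives contributions from words eta with |eta| <= |w|.\<close>
definition comp :: "nat \<Rightarrow> (nat list \<Rightarrow> nat \<Rightarrow> 'k::comm_ring_1) \<Rightarrow> (nat list \<Rightarrow> nat \<Rightarrow> 'k)
    \<Rightarrow> nat list \<Rightarrow> nat \<Rightarrow> 'k" where
  "comp m c d w j = (\<Sum>\<eta>\<in>{\<eta>. \<eta> \<in> words m \<and> length \<eta> \<le> length w}. c \<eta> j * psi_one d \<eta> w)"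

definition vnorm :: "nat \<Rightarrow> (nat \<Rightarrow> 'k::real_normed_vector) \<Rightarrow> real" where
  "vnorm n z = Max (insert 0 ((\<lambda>i. norm (z i)) ` {..<n}))"

definition normset :: "nat \<Rightarrow> real \<Rightarrow> nat \<Rightarrow> (nat list \<Rightarrow> nat \<Rightarrow> 'k::real_normed_vector) \<Rightarrow> real set" where
  "normset m M n c = {vnorm n (c \<eta>) / (M ^ length \<eta> * fact (length \<eta>)) | \<eta>. \<eta> \<in> words m}"

definition in_linf :: "nat \<Rightarrow> real \<Rightarrow> nat \<Rightarrow> (nat list \<Rightarrow> nat \<Rightarrow> 'k::real_normed_vector) \<Rightarrow> bool" where
  "in_linf m M n c \<longleftrightarrow> bdd_above (normset m M n c)"

definition linf_norm :: "nat \<Rightarrow> real \<Rightarrow> nat \<Rightarrow> (nat list \<Rightarrow> nat \<Rightarrow> 'k::real_normed_vector) \<Rightarrow> real" where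
  "linf_norm m M n c = Sup (normset m M n c)"

definition phi :: "real \<Rightarrow> real" where
  "phi x = x / 2 + sqrt (x ^ 2 / 4 + x)"

definition Keps :: "nat \<Rightarrow> real \<Rightarrow> real \<Rightarrow> real" where
  "Keps m eps a = (SUP \<eta>\<in>words m. (real (length \<eta>) + 1) * (1 + a) ^ length \<eta> / (1 + eps) ^ length \<eta>)"

end

theory Submission
  imports Defs
begin

text \<open>Let K be the norm of d, \<phi> = phi (m K) and \<alpha> = 1 + \<phi>, so that m K \<alpha> = \<phi>^2.
  By the shuffle recursion, the coefficient of a word x_0 w' in psi_d(x_i \<eta>)(1) is a sum, over
  the splittings of w' into two complementary subwords u and v, of (d[i], u) times the coefficient
  of v in psi_d(\<eta>)(1). Induction on k then shows that for a word w of length n the coefficients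
  of w in psi_d(\<eta>)(1), summed in absolute value over all \<eta> of length k, are at most
  n!/k! M^(n-k) \<alpha>^n: the splittings produce a binomial convolution, and the equation
  m K \<alpha> = \<phi>^2 is exactly what makes the resulting geometric sum close up.
  Weighting with |(c, \<eta>)| \<le> \<parallel>c\<parallel> M^k k! and summing over k \<le> n gives
  |(c \<circ> d, w)| \<le> (n + 1) \<parallel>c\<parallel> n! M^n \<alpha>^n, and dividing by (M (1 + \<epsilon>))^n n! leaves
  \<parallel>c\<parallel> (n + 1) (\<alpha> / (1 + \<epsilon>))^n \<le> \<parallel>c\<parallel> K_\<epsilon>(\<phi>).\<close>

section \<open>Shuffles as sums over splittings\<close>

lemma sum_list_map_eq_sum_count_of_nat:
  fixes f :: "'a \<Rightarrow> 'b::comm_semiring_1"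
  assumes "set xs \<subseteq> X" "finite X"
  shows "sum_list (map f xs) = (\<Sum>x\<in>X. of_nat (count_list xs x) * f x)"
  using assms
proof (induction xs)
  case (Cons y xs)
  have "(\<Sum>x\<in>X. of_nat (count_list (y # xs) x) * f x) =
        (\<Sum>x\<in>X. (if x = y then f x else 0) + of_nat (count_list xs x) * f x)"
    by (rule sum.cong) (auto simp: algebra_simps)
  also have "\<dots> = f y + (\<Sum>x\<in>X. of_nat (count_list xs x) * f x)"
    using Cons.prems by (simp add: sum.distrib)
  finally show ?case using Cons by simp
qed simp

lemma sum_choose_Suc_split:
  fixes G :: "nat \<Rightarrow> nat \<Rightarrow> 'a::comm_semiring_1"
  shows "(\<Sum>p\<le>Suc n. of_nat (Suc n choose p) * G p (Suc n - p)) =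
    (\<Sum>p\<le>n. of_nat (n choose p) * G (Suc p) (n - p)) + (\<Sum>p\<le>n. of_nat (n choose p) * G p (Suc n - p))"
proof -
  have "(\<Sum>p\<le>n. of_nat (n choose p) * G p (Suc n - p)) =
      (\<Sum>p\<le>Suc n. of_nat (n choose p) * G p (Suc n - p))"
    by (simp add: binomial_eq_0)
  also have "\<dots> = G 0 (Suc n) + (\<Sum>p\<le>n. of_nat (n choose Suc p) * G (Suc p) (n - p))"
    by (simp add: sum.atMost_Suc_shift del: sum.atMost_Suc)
  finally show ?thesis
    by (simp add: sum.atMost_Suc_shift sum.distrib algebra_simps del: sum.atMost_Suc)
qed

fun splits :: "'a list \<Rightarrow> ('a list \<times> 'a list) list" where
  "splits [] = [([], [])]"
| "splits (c # w) = map (\<lambda>(u, v). (c # u, v)) (splits w) @ map (\<lambda>(u, v). (u, c # v)) (splits w)"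

lemma count_list_map_Cons:
  "count_list (map ((#) a) X) w =
    (case w of [] \<Rightarrow> 0 | b # w' \<Rightarrow> if a = b then count_list X w' else 0)"
  by (induction X) (auto split: list.splits)

lemma count_list_map_Cons_fst:
  "count_list (map (\<lambda>(x, y). (c # x, y)) X) (u, v) =
    (case u of [] \<Rightarrow> 0 | a # u' \<Rightarrow> if a = c then count_list X (u', v) else 0)"
  by (induction X) (auto split: list.splits)

lemma count_list_map_Cons_snd:
  "count_list (map (\<lambda>(x, y). (x, c # y)) X) (u, v) =
    (case v of [] \<Rightarrow> 0 | b # v' \<Rightarrow> if b = c then count_list X (u, v') else 0)"
  by (induction X) (auto split: list.splits)

lemma shw_Nil_right [simp]: "shw u [] = [u]"
  by (cases u) auto

lemma count_shw_eq_count_splits: "count_list (shw u v) w = count_list (splits w) (u, v)"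
proof (induction w arbitrary: u v)
  case Nil
  then show ?case
    by (cases u; cases v) (auto simp: count_list_map_Cons)
next
  case (Cons c w)
  show ?case
  proof (cases u)
    case Nil
    then show ?thesis
      by (cases v) (auto simp: count_list_map_Cons_fst count_list_map_Cons_snd simp flip: Cons.IH)
  next
    case (Cons a u')
    then show ?thesis
      by (cases v)
        (auto simp: count_list_map_Cons_fst count_list_map_Cons_snd count_list_map_Cons simp flip: Cons.IH)
  qed
qed

lemma splits_subseqs:
  "(u, v) \<in> set (splits w) \<Longrightarrow> u \<in> set (subseqs w) \<and> v \<in> set (subseqs w)"
proof (induction w arbitrary: u v)
  case (Cons c w)
  then consider u' where "u = c # u'" "(u', v) \<in> set (splits w)"
    | v' where "v = c # v'" "(u, v') \<in> set (splits w)"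
    by auto
  then show ?case
    by cases (use Cons.IH in \<open>auto simp: Let_def\<close>)
qed simp

lemma set_subset_of_subseqs: "u \<in> set (subseqs w) \<Longrightarrow> set u \<subseteq> set w"
  using imageI[of u "set (subseqs w)" set] by (simp add: subseqs_powset)

lemma shuffle_eq_sum_splits:
  "shuffle f g w = (\<Sum>(u, v)\<leftarrow>splits w. f u * g v)"
proof -
  let ?S = "set (subseqs w)"
  have "(\<Sum>(u, v)\<leftarrow>splits w. f u * g v) =
     (\<Sum>p\<in>?S \<times> ?S. of_nat (count_list (splits w) p) * (case p of (u, v) \<Rightarrow> f u * g v))"
    by (rule sum_list_map_eq_sum_count_of_nat) (auto dest: splits_subseqs)
  also have "\<dots> = (\<Sum>u\<in>?S. \<Sum>v\<in>?S. f u * g v * of_nat (count_list (shw u v) w))"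
    unfolding sum.cartesian_product
    by (rule sum.cong) (auto simp: count_shw_eq_count_splits mult.commute)
  finally show ?thesis by (simp add: shuffle_def)
qed

lemma sum_list_splits_lengths:
  fixes F :: "nat \<Rightarrow> nat \<Rightarrow> 'a::comm_semiring_1"
  shows "(\<Sum>(u, v)\<leftarrow>splits w. F (length u) (length v)) =
    (\<Sum>p\<le>length w. of_nat (length w choose p) * F p (length w - p))"
proof (induction w arbitrary: F)
  case (Cons c w)
  have "(\<Sum>p\<le>length w. of_nat (length w choose p) * F p (Suc (length w - p))) =
      (\<Sum>p\<le>length w. of_nat (length w choose p) * F p (Suc (length w) - p))"
    by (rule sum.cong) (auto simp: Suc_diff_le)
  then show ?case
    using Cons.IH[of "\<lambda>p q. F (Suc p) q"] Cons.IH[of "\<lambda>p q. F p (Suc q)"]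
    by (simp add: split_def o_def sum_choose_Suc_split del: sum.atMost_Suc)
qed simp

section \<open>Words and weighted supremum norms\<close>

lemma Nil_in_words [simp]: "[] \<in> words m"
  by (simp add: words_def)

lemma Cons_in_words [simp]: "i # \<eta> \<in> words m \<longleftrightarrow> i \<le> m \<and> \<eta> \<in> words m"
  by (simp add: words_def)

lemma splits_in_words:
  assumes "(u, v) \<in> set (splits w)" "w \<in> words m"
  shows "u \<in> words m" "v \<in> words m"
  using splits_subseqs[OF assms(1)] assms(2)
  by (auto simp: words_def dest!: set_subset_of_subseqs)

definition words_of_length :: "nat \<Rightarrow> nat \<Rightarrow> nat list set" where
  "words_of_length m k = {\<eta> \<in> words m. length \<eta> = k}"

lemma finite_words_of_length: "finite (words_of_length m k)"
  using finite_lists_length_eq[of "{0..m}" k]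
  by (simp add: words_of_length_def words_def conj_commute)

lemma words_of_length_0: "words_of_length m 0 = {[]}"
  by (auto simp: words_of_length_def)

lemma words_of_length_Suc:
  "words_of_length m (Suc k) = (\<lambda>(i, \<eta>). i # \<eta>) ` ({0..m} \<times> words_of_length m k)"
  by (auto simp: words_of_length_def image_iff length_Suc_conv)

lemma sum_words_of_length_Suc:
  "(\<Sum>\<eta>\<in>words_of_length m (Suc k). g \<eta>) = (\<Sum>i=0..m. \<Sum>\<eta>\<in>words_of_length m k. g (i # \<eta>))"
proof -
  have "inj_on (\<lambda>(i, \<eta>). i # \<eta>) ({0..m} \<times> words_of_length m k)"
    by (auto simp: inj_on_def)
  then show ?thesis
    by (simp add: words_of_length_Suc sum.reindex sum.cartesian_product split_def)
qed

lemma norm_le_vnorm: "i < n \<Longrightarrow> norm (z i) \<le> vnorm n z"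
  unfolding vnorm_def by (rule Max_ge) auto

lemma vnorm_nonneg: "vnorm n z \<ge> 0"
  by (simp add: vnorm_def)

lemma vnorm_leI: "B \<ge> 0 \<Longrightarrow> (\<And>i. i < n \<Longrightarrow> norm (z i) \<le> B) \<Longrightarrow> vnorm n z \<le> B"
  unfolding vnorm_def by (subst Max_le_iff) auto

lemma vnorm_le_linf_norm:
  assumes "in_linf m M n c" "M > 0" "\<eta> \<in> words m"
  shows "vnorm n (c \<eta>) \<le> linf_norm m M n c * M ^ length \<eta> * fact (length \<eta>)"
proof -
  have "vnorm n (c \<eta>) / (M ^ length \<eta> * fact (length \<eta>)) \<le> linf_norm m M n c"
    using assms unfolding in_linf_def linf_norm_def normset_def by (auto intro: cSup_upper)
  moreover have "M ^ length \<eta> * fact (length \<eta>) > 0"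
    using assms(2) by simp
  ultimately show ?thesis
    by (simp add: divide_le_eq mult.assoc)
qed

lemma norm_le_linf_norm:
  assumes "in_linf m M n c" "M > 0" "\<eta> \<in> words m" "i < n"
  shows "norm (c \<eta> i) \<le> linf_norm m M n c * M ^ length \<eta> * fact (length \<eta>)"
  using norm_le_vnorm[OF assms(4)] vnorm_le_linf_norm[OF assms(1-3)] by (rule order_trans)

lemma linf_norm_nonneg: "in_linf m M n c \<Longrightarrow> M > 0 \<Longrightarrow> linf_norm m M n c \<ge> 0"
  using vnorm_le_linf_norm[of m M n c "[]"] vnorm_nonneg[of n "c []"] by simp

lemma in_linf_linf_norm_leI:
  assumes "M > 0"
    and bound: "\<And>\<eta>. \<eta> \<in> words m \<Longrightarrow> vnorm n (c \<eta>) \<le> B * M ^ length \<eta> * fact (length \<eta>)"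
  shows "in_linf m M n c \<and> linf_norm m M n c \<le> B"
proof -
  have le_B: "x \<le> B" if x_in: "x \<in> normset m M n c" for x
  proof -
    obtain \<eta> where "\<eta> \<in> words m" and x: "x = vnorm n (c \<eta>) / (M ^ length \<eta> * fact (length \<eta>))"
      using x_in unfolding normset_def by blast
    then show ?thesis
      using bound[of \<eta>] assms(1) by (simp add: divide_le_eq mult.assoc)
  qed
  have "normset m M n c \<noteq> {}"
    unfolding normset_def using Nil_in_words by blast
  with le_B show ?thesis
    unfolding in_linf_def linf_norm_def by (meson bdd_aboveI cSup_least)
qed

section \<open>The majorants\<close>

lemma phi_nonneg: "a \<ge> 0 \<Longrightarrow> phi a \<ge> 0"
  by (simp add: phi_def)

lemma phi_fixed_point:
  assumes "a \<ge> 0"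
  shows "a * (1 + phi a) = phi a ^ 2"
proof -
  define s where "s = sqrt (a ^ 2 / 4 + a)"
  have s2: "s ^ 2 = a ^ 2 / 4 + a"
    using assms unfolding s_def by (intro real_sqrt_pow2) simp
  have "(a / 2 + s) ^ 2 = a ^ 2 / 4 + a * s + s ^ 2"
    by (simp add: power2_eq_square algebra_simps)
  moreover have "a * (1 + (a / 2 + s)) = a + a ^ 2 / 2 + a * s"
    by (simp add: power2_eq_square algebra_simps)
  ultimately show ?thesis
    using s2 unfolding phi_def s_def[symmetric] by linarith
qed

lemma fixed_point_geometric_sum_le:
  fixes a \<phi> :: real
  assumes "a \<ge> 0" "\<phi> \<ge> 0" and fixed_point: "a * (1 + \<phi>) = \<phi> ^ 2"
  shows "a * (\<Sum>j\<le>n. (1 + \<phi>) ^ j) \<le> \<phi> * (1 + \<phi>) ^ n"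
proof (induction n)
  case 0
  have "a * (1 + \<phi>) \<le> \<phi> * (1 + \<phi>)"
    using assms by (simp add: power2_eq_square algebra_simps)
  then show ?case
    using assms mult_le_cancel_right_pos[of "1 + \<phi>" a \<phi>] by simp
next
  case (Suc n)
  have "a * (\<Sum>j\<le>Suc n. (1 + \<phi>) ^ j) = a * (\<Sum>j\<le>n. (1 + \<phi>) ^ j) + a * (1 + \<phi>) * (1 + \<phi>) ^ n"
    by (simp add: algebra_simps)
  also have "\<dots> \<le> \<phi> * (1 + \<phi>) ^ n + \<phi> ^ 2 * (1 + \<phi>) ^ n"
    using Suc fixed_point by simp
  also have "\<dots> = \<phi> * (1 + \<phi>) ^ Suc n"
    by (simp add: algebra_simps power2_eq_square)
  finally show ?case .
qed

text \<open>Vanishes for k > n because psi_d(eta)(1) contains no word shorter than eta.\<close>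
definition psi_majorant :: "real \<Rightarrow> real \<Rightarrow> nat \<Rightarrow> nat \<Rightarrow> real" where
  "psi_majorant M \<alpha> k n = (if k \<le> n then fact n / fact k * M ^ (n - k) * \<alpha> ^ n else 0)"

text \<open>Majorant of the sum over i = 0..m of the coefficients of d[i] at a word of length p:
  the indicator accounts for d[0] = 1, and a stands for m times the norm of d.\<close>
definition letter_majorant :: "real \<Rightarrow> real \<Rightarrow> nat \<Rightarrow> real" where
  "letter_majorant M a p = (if p = 0 then 1 else 0) + a * M ^ p * fact p"

lemma psi_majorant_nonneg: "M \<ge> 0 \<Longrightarrow> \<alpha> \<ge> 0 \<Longrightarrow> psi_majorant M \<alpha> k n \<ge> 0"
  by (simp add: psi_majorant_def)

lemma letter_majorant_nonneg: "M \<ge> 0 \<Longrightarrow> a \<ge> 0 \<Longrightarrow> letter_majorant M a p \<ge> 0"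
  by (simp add: letter_majorant_def)

lemma choose_mult_psi_majorant_le:
  assumes "M > 0" "\<alpha> \<ge> 0" "p \<le> n"
  shows "of_nat (n choose p) * M ^ p * fact p * psi_majorant M \<alpha> k (n - p)
    \<le> fact n / fact k * M ^ (n - k) * \<alpha> ^ (n - p)"
proof (cases "k \<le> n - p")
  case True
  have fact_n: "of_nat (n choose p) * fact p * fact (n - p) = (fact n :: real)"
    using assms(3) by (simp add: binomial_fact field_simps)
  have M_pow: "M ^ p * M ^ (n - p - k) = M ^ (n - k)"
    using True assms(3) by (simp flip: power_add)
  have "of_nat (n choose p) * M ^ p * fact p * psi_majorant M \<alpha> k (n - p)
      = (of_nat (n choose p) * fact p * fact (n - p)) / fact k * (M ^ p * M ^ (n - p - k)) * \<alpha> ^ (n - p)"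
    using True by (simp add: psi_majorant_def)
  then show ?thesis by (simp only: fact_n M_pow)
next
  case False
  then show ?thesis using assms by (simp add: psi_majorant_def)
qed

lemma psi_majorant_step:
  fixes M a \<phi> :: real
  assumes M: "M > 0" and a: "a \<ge> 0" and \<phi>: "\<phi> \<ge> 0" and fixed_point: "a * (1 + \<phi>) = \<phi> ^ 2"
  shows "(\<Sum>p\<le>n. of_nat (n choose p) * (letter_majorant M a p * psi_majorant M (1 + \<phi>) k (n - p)))
    \<le> psi_majorant M (1 + \<phi>) (Suc k) (Suc n)"
proof (cases "k \<le> n")
  case False
  then have "\<not> k \<le> n - p" for p by auto
  with False show ?thesis by (simp add: psi_majorant_def)
next
  case True
  let ?\<alpha> = "1 + \<phi>"
  let ?C = "fact n / fact k * M ^ (n - k)"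
  have "(\<Sum>p\<le>n. of_nat (n choose p) * (letter_majorant M a p * psi_majorant M ?\<alpha> k (n - p)))
      = psi_majorant M ?\<alpha> k n
        + a * (\<Sum>p\<le>n. of_nat (n choose p) * M ^ p * fact p * psi_majorant M ?\<alpha> k (n - p))"
  proof -
    have "of_nat (n choose p) * (letter_majorant M a p * psi_majorant M ?\<alpha> k (n - p))
        = (if p = 0 then psi_majorant M ?\<alpha> k n else 0)
          + a * (of_nat (n choose p) * M ^ p * fact p * psi_majorant M ?\<alpha> k (n - p))" for p
      by (simp add: letter_majorant_def algebra_simps)
    then show ?thesis by (simp add: sum.distrib sum_distrib_left)
  qed
  also have "\<dots> \<le> ?C * ?\<alpha> ^ n + a * (\<Sum>p\<le>n. ?C * ?\<alpha> ^ (n - p))"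
    using True M \<phi> a
    by (intro add_mono mult_left_mono sum_mono choose_mult_psi_majorant_le)
      (simp_all add: psi_majorant_def)
  also have "(\<Sum>p\<le>n. ?C * ?\<alpha> ^ (n - p)) = ?C * (\<Sum>j\<le>n. ?\<alpha> ^ j)"
    using sum.atLeastAtMost_rev[of "\<lambda>j. ?\<alpha> ^ j" 0 n]
    by (simp add: atLeast0AtMost sum_distrib_left)
  also have "a * (?C * (\<Sum>j\<le>n. ?\<alpha> ^ j)) = ?C * (a * (\<Sum>j\<le>n. ?\<alpha> ^ j))"
    by (rule mult.left_commute)
  also have "?C * ?\<alpha> ^ n + \<dots> \<le> ?C * ?\<alpha> ^ n + ?C * (\<phi> * ?\<alpha> ^ n)"
    using M by (intro add_left_mono mult_left_mono fixed_point_geometric_sum_le[OF a \<phi> fixed_point]) simp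
  also have "\<dots> = fact n / fact k * M ^ (n - k) * ?\<alpha> ^ Suc n"
    by (simp add: algebra_simps)
  also have "\<dots> \<le> fact (Suc n) / fact (Suc k) * M ^ (n - k) * ?\<alpha> ^ Suc n"
  proof -
    have "fact n / fact k \<le> (fact (Suc n) / fact (Suc k) :: real)"
      using True by (simp add: divide_simps)
    then show ?thesis
      using M \<phi> by (intro mult_right_mono) simp_all
  qed
  also have "\<dots> = psi_majorant M ?\<alpha> (Suc k) (Suc n)"
    using True by (simp add: psi_majorant_def)
  finally show ?thesis .
qed

section \<open>Coefficient bounds for the composition product\<close>

lemma psi_one_Cons_Nil: "psi_one d (i # \<eta>) [] = 0"
  by (simp add: pre0_def)

lemma psi_one_Cons_Cons:
  "psi_one d (i # \<eta>) (b # w) =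
    (if b = 0 then (\<Sum>(u, v)\<leftarrow>splits w. dcomp d i u * psi_one d \<eta> v) else 0)"
  by (simp add: pre0_def shuffle_eq_sum_splits)

lemma norm_sum_list_le:
  fixes f :: "'a \<Rightarrow> 'b::real_normed_vector"
  shows "norm (\<Sum>x\<leftarrow>xs. f x) \<le> (\<Sum>x\<leftarrow>xs. norm (f x))"
  by (induction xs) (auto intro: order_trans[OF norm_triangle_ineq])

lemma sum_norm_psi_one_Suc_le:
  fixes d :: "nat list \<Rightarrow> nat \<Rightarrow> 'k::real_normed_field"
  shows "(\<Sum>\<eta>\<in>words_of_length m (Suc k). norm (psi_one d \<eta> (b # w)))
    \<le> (\<Sum>(u, v)\<leftarrow>splits w. (\<Sum>i=0..m. norm (dcomp d i u))
                              * (\<Sum>\<eta>\<in>words_of_length m k. norm (psi_one d \<eta> v)))"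
proof (cases "b = 0")
  case True
  have "(\<Sum>\<eta>\<in>words_of_length m (Suc k). norm (psi_one d \<eta> (b # w)))
      = (\<Sum>i=0..m. \<Sum>\<eta>\<in>words_of_length m k.
           norm (\<Sum>(u, v)\<leftarrow>splits w. dcomp d i u * psi_one d \<eta> v))"
    using True by (simp add: sum_words_of_length_Suc psi_one_Cons_Cons del: psi_one.simps)
  also have "\<dots> \<le> (\<Sum>i=0..m. \<Sum>\<eta>\<in>words_of_length m k.
           \<Sum>(u, v)\<leftarrow>splits w. norm (dcomp d i u) * norm (psi_one d \<eta> v))"
    by (intro sum_mono order_trans[OF norm_sum_list_le]) (simp add: split_def norm_mult)
  also have "\<dots> = (\<Sum>(u, v)\<leftarrow>splits w. (\<Sum>i=0..m. norm (dcomp d i u))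
                              * (\<Sum>\<eta>\<in>words_of_length m k. norm (psi_one d \<eta> v)))"
    by (simp add: sum_list_sum_nth sum_product split_def sum.swap[of _ "{0..<length (splits w)}"])
  finally show ?thesis .
next
  case False
  then show ?thesis
    by (simp add: sum_words_of_length_Suc psi_one_Cons_Cons del: psi_one.simps)
      (auto intro!: sum_list_nonneg mult_nonneg_nonneg sum_nonneg)
qed

lemma sum_norm_dcomp_le:
  fixes d :: "nat list \<Rightarrow> nat \<Rightarrow> 'k::real_normed_field"
  assumes "\<And>i. i < m \<Longrightarrow> norm (d u i) \<le> K * M ^ length u * fact (length u)"
  shows "(\<Sum>i=0..m. norm (dcomp d i u)) \<le> letter_majorant M (real m * K) (length u)"
proof -
  have "(\<Sum>i=0..m. norm (dcomp d i u)) = norm (one_s u :: 'k) + (\<Sum>i=Suc 0..m. norm (d u (i - 1)))"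
    by (simp add: sum.atLeast_Suc_atMost dcomp_def)
  also have "\<dots> \<le> (if length u = 0 then 1 else 0) + (\<Sum>i=Suc 0..m. K * M ^ length u * fact (length u))"
    using assms by (intro add_mono sum_mono) (auto simp: one_s_def)
  also have "\<dots> = letter_majorant M (real m * K) (length u)"
    by (simp add: letter_majorant_def)
  finally show ?thesis .
qed

lemma sum_norm_psi_one_le:
  fixes d :: "nat list \<Rightarrow> nat \<Rightarrow> 'k::real_normed_field"
  assumes M: "M > 0" and K: "K \<ge> 0" and \<phi>: "\<phi> \<ge> 0"
    and fixed_point: "real m * K * (1 + \<phi>) = \<phi> ^ 2"
    and d: "\<And>u i. u \<in> words m \<Longrightarrow> i < m \<Longrightarrow> norm (d u i) \<le> K * M ^ length u * fact (length u)"
  shows "w \<in> words m \<Longrightarrow>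
    (\<Sum>\<eta>\<in>words_of_length m k. norm (psi_one d \<eta> w)) \<le> psi_majorant M (1 + \<phi>) k (length w)"
proof (induction k arbitrary: w)
  case 0
  show ?case
    using M \<phi> by (simp add: words_of_length_0 one_s_def psi_majorant_def)
next
  case (Suc k)
  show ?case
  proof (cases w)
    case Nil
    then show ?thesis
      using M \<phi> by (simp add: psi_one_Cons_Nil psi_majorant_nonneg sum_words_of_length_Suc del: psi_one.simps)
  next
    case (Cons b w')
    have w': "w' \<in> words m"
      using Suc.prems Cons by simp
    let ?n = "length w'"
    have "(\<Sum>\<eta>\<in>words_of_length m (Suc k). norm (psi_one d \<eta> w))
        \<le> (\<Sum>(u, v)\<leftarrow>splits w'. (\<Sum>i=0..m. norm (dcomp d i u))
                                 * (\<Sum>\<eta>\<in>words_of_length m k. norm (psi_one d \<eta> v)))"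
      unfolding Cons by (rule sum_norm_psi_one_Suc_le)
    also have "\<dots> \<le> (\<Sum>(u, v)\<leftarrow>splits w'.
        letter_majorant M (real m * K) (length u) * psi_majorant M (1 + \<phi>) k (length v))"
    proof (rule sum_list_mono, clarify)
      fix u v
      assume "(u, v) \<in> set (splits w')"
      with w' have "u \<in> words m" "v \<in> words m"
        by (auto dest: splits_in_words)
      then show "(\<Sum>i=0..m. norm (dcomp d i u)) * (\<Sum>\<eta>\<in>words_of_length m k. norm (psi_one d \<eta> v))
          \<le> letter_majorant M (real m * K) (length u) * psi_majorant M (1 + \<phi>) k (length v)"
        using d M K by (intro mult_mono sum_norm_dcomp_le Suc.IH) (auto intro: letter_majorant_nonneg sum_nonneg)
    qed
    also have "\<dots> = (\<Sum>p\<le>?n. of_nat (?n choose p)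
        * (letter_majorant M (real m * K) p * psi_majorant M (1 + \<phi>) k (?n - p)))"
      by (rule sum_list_splits_lengths)
    also have "\<dots> \<le> psi_majorant M (1 + \<phi>) (Suc k) (Suc ?n)"
      using M K \<phi> fixed_point by (intro psi_majorant_step) simp_all
    finally show ?thesis
      using Cons by simp
  qed
qed

lemma norm_comp_le:
  fixes c d :: "nat list \<Rightarrow> nat \<Rightarrow> 'k::real_normed_field"
  assumes M: "M > 0" and C: "C \<ge> 0"
    and c: "\<And>\<eta>. \<eta> \<in> words m \<Longrightarrow> norm (c \<eta> j) \<le> C * M ^ length \<eta> * fact (length \<eta>)"
    and psi: "\<And>k. (\<Sum>\<eta>\<in>words_of_length m k. norm (psi_one d \<eta> w)) \<le> psi_majorant M \<alpha> k (length w)"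
  shows "norm (comp m c d w j)
    \<le> (real (length w) + 1) * C * fact (length w) * M ^ length w * \<alpha> ^ length w"
proof -
  let ?n = "length w"
  have grouped: "{\<eta>. \<eta> \<in> words m \<and> length \<eta> \<le> ?n} = (\<Union>k\<le>?n. words_of_length m k)"
    by (auto simp: words_of_length_def)
  have "norm (comp m c d w j)
      \<le> (\<Sum>\<eta>\<in>{\<eta>. \<eta> \<in> words m \<and> length \<eta> \<le> ?n}. norm (c \<eta> j) * norm (psi_one d \<eta> w))"
    unfolding comp_def by (rule order_trans[OF norm_sum]) (simp add: norm_mult)
  also have "\<dots> = (\<Sum>k\<le>?n. \<Sum>\<eta>\<in>words_of_length m k. norm (c \<eta> j) * norm (psi_one d \<eta> w))"
    unfolding grouped
    by (intro sum.UNION_disjoint finite_words_of_length ballI) (auto simp: words_of_length_def)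
  also have "\<dots> \<le> (\<Sum>k\<le>?n. C * M ^ k * fact k * (\<Sum>\<eta>\<in>words_of_length m k. norm (psi_one d \<eta> w)))"
    unfolding sum_distrib_left
    using c by (intro sum_mono mult_right_mono) (auto simp: words_of_length_def)
  also have "\<dots> \<le> (\<Sum>k\<le>?n. C * M ^ k * fact k * psi_majorant M \<alpha> k ?n)"
    using M C psi by (intro sum_mono mult_left_mono) auto
  also have "\<dots> = (\<Sum>k\<le>?n. C * fact ?n * M ^ ?n * \<alpha> ^ ?n)"
  proof (rule sum.cong[OF refl])
    fix k
    assume "k \<in> {..?n}"
    moreover from this have "M ^ k * M ^ (?n - k) = M ^ ?n"
      by (simp flip: power_add)
    ultimately show "C * M ^ k * fact k * psi_majorant M \<alpha> k ?n = C * fact ?n * M ^ ?n * \<alpha> ^ ?n"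
      by (simp add: psi_majorant_def algebra_simps)
  qed
  also have "\<dots> = (real ?n + 1) * C * fact ?n * M ^ ?n * \<alpha> ^ ?n"
    by simp
  finally show ?thesis .
qed

lemma linear_times_geometric_bounded:
  fixes r :: real
  assumes "0 \<le> r" "r < 1"
  obtains B where "\<And>n. (real n + 1) * r ^ n \<le> B"
proof -
  have "(\<lambda>n. real n * r ^ n + r ^ n) \<longlonglongrightarrow> 0 + 0"
    using assms by (intro tendsto_add powser_times_n_limit_0 LIMSEQ_power_zero) auto
  then have "Bseq (\<lambda>n. real n * r ^ n + r ^ n)"
    by (intro convergent_imp_Bseq) (auto simp: convergent_def)
  then obtain B where B: "\<And>n. norm (real n * r ^ n + r ^ n) \<le> B"
    unfolding Bseq_def by blast
  have "(real n + 1) * r ^ n \<le> B" for n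
  proof -
    have "(real n + 1) * r ^ n \<le> norm (real n * r ^ n + r ^ n)"
      by (simp add: algebra_simps)
    then show ?thesis
      using B[of n] by linarith
  qed
  then show thesis
    by (rule that)
qed

lemma Keps_upper:
  assumes "0 \<le> a" "a < eps" "\<eta> \<in> words m"
  shows "(real (length \<eta>) + 1) * (1 + a) ^ length \<eta> \<le> Keps m eps a * (1 + eps) ^ length \<eta>"
proof -
  define r where "r = (1 + a) / (1 + eps)"
  have "0 \<le> r" "r < 1"
    using assms by (auto simp: r_def divide_less_eq)
  then obtain B where B: "\<And>n. (real n + 1) * r ^ n \<le> B"
    using linear_times_geometric_bounded by blast
  have term_eq: "(real (length \<xi>) + 1) * (1 + a) ^ length \<xi> / (1 + eps) ^ length \<xi>
      = (real (length \<xi>) + 1) * r ^ length \<xi>" for \<xi> :: "nat list"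
    by (simp add: r_def power_divide)
  have "(real (length \<eta>) + 1) * r ^ length \<eta> \<le> Keps m eps a"
    unfolding Keps_def term_eq using B assms(3) by (intro cSUP_upper bdd_aboveI2) auto
  then show ?thesis
    using assms by (simp add: term_eq[symmetric] divide_le_eq)
qed

lemma sum_norm_psi_one_le_linf_norm:
  fixes d :: "nat list \<Rightarrow> nat \<Rightarrow> 'k::real_normed_field"
  assumes "M > 0" "in_linf m M m d" "w \<in> words m"
  shows "(\<Sum>\<eta>\<in>words_of_length m k. norm (psi_one d \<eta> w))
    \<le> psi_majorant M (1 + phi (real m * linf_norm m M m d)) k (length w)"
proof -
  have K: "linf_norm m M m d \<ge> 0"
    using assms(2,1) by (rule linf_norm_nonneg)
  then have mK: "real m * linf_norm m M m d \<ge> 0"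
    by simp
  show ?thesis
    by (rule sum_norm_psi_one_le[OF assms(1) K phi_nonneg[OF mK] phi_fixed_point[OF mK]
          norm_le_linf_norm[OF assms(2,1)] assms(3)])
qed

lemma vnorm_comp_le:
  fixes c d :: "nat list \<Rightarrow> nat \<Rightarrow> 'k::real_normed_field"
  assumes M: "M > 0" and c: "in_linf m M l c" and \<phi>: "0 \<le> \<phi>" "\<phi> < eps" and w: "w \<in> words m"
    and psi: "\<And>k. (\<Sum>\<eta>\<in>words_of_length m k. norm (psi_one d \<eta> w)) \<le> psi_majorant M (1 + \<phi>) k (length w)"
  shows "vnorm l (comp m c d w)
    \<le> linf_norm m M l c * Keps m eps \<phi> * (M * (1 + eps)) ^ length w * fact (length w)"
proof (rule vnorm_leI)
  let ?C = "linf_norm m M l c"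
  let ?n = "length w"
  have C: "?C \<ge> 0"
    using c M by (rule linf_norm_nonneg)
  have "Keps m eps \<phi> \<ge> 1"
    using Keps_upper[OF \<phi> Nil_in_words[of m]] by simp
  then show "0 \<le> ?C * Keps m eps \<phi> * (M * (1 + eps)) ^ ?n * fact ?n"
    using C M \<phi> by (intro mult_nonneg_nonneg) auto
  fix j
  assume "j < l"
  have "norm (comp m c d w j) \<le> (real ?n + 1) * ?C * fact ?n * M ^ ?n * (1 + \<phi>) ^ ?n"
    using M C norm_le_linf_norm[OF c M _ \<open>j < l\<close>] psi by (rule norm_comp_le)
  also have "\<dots> = ?C * fact ?n * M ^ ?n * ((real ?n + 1) * (1 + \<phi>) ^ ?n)"
    by (simp add: algebra_simps)
  also have "\<dots> \<le> ?C * fact ?n * M ^ ?n * (Keps m eps \<phi> * (1 + eps) ^ ?n)"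
    using Keps_upper[OF \<phi> w] C M by (intro mult_left_mono) simp_all
  also have "\<dots> = ?C * Keps m eps \<phi> * (M * (1 + eps)) ^ ?n * fact ?n"
    by (simp add: power_mult_distrib)
  finally show "norm (comp m c d w j) \<le> ?C * Keps m eps \<phi> * (M * (1 + eps)) ^ ?n * fact ?n" .
qed

theorem lemma3p7:
  fixes M eps :: real and l m :: nat
    and c d :: "nat list \<Rightarrow> nat \<Rightarrow> 'k::real_normed_field"
  assumes "M > 0"
    and "in_linf m M l c"
    and "in_linf m M m d"
    and "eps > phi (real m * linf_norm m M m d)"
  shows "in_linf m (M * (1 + eps)) l (comp m c d) \<and>
         linf_norm m (M * (1 + eps)) l (comp m c d)
           \<le> linf_norm m M l c * Keps m eps (phi (real m * linf_norm m M m d))"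
proof -
  let ?\<phi> = "phi (real m * linf_norm m M m d)"
  have \<phi>: "?\<phi> \<ge> 0"
    using linf_norm_nonneg[OF assms(3,1)] by (simp add: phi_nonneg)
  have "vnorm l (comp m c d w)
      \<le> linf_norm m M l c * Keps m eps ?\<phi> * (M * (1 + eps)) ^ length w * fact (length w)"
    if "w \<in> words m" for w
    using assms(1,2) \<phi> assms(4) that sum_norm_psi_one_le_linf_norm[OF assms(1,3) that]
    by (rule vnorm_comp_le)
  moreover have "M * (1 + eps) > 0"
    using assms(1,4) \<phi> by simp
  ultimately show ?thesis
    by (intro in_linf_linf_norm_leI)
qed

end
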